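(* Consider the adaptive experiment described in the context, with truncated propensities $\pi_t(a\mid X_t,\Omega_{t-1})\in[1/k_t,1-1/k_t]$. Assume: $\mathrm{Var}(Y_t)<\infty$; $v(a,x)<\infty$ for all $a\in\{0,1\}$, $x\in\mathcal{X}$; $k_t\lVert\hat f_t-f\rVert_2=o_{\mathbb{P}}(1)$; $k_t\lVert\pi_t-\pi\rVert_2=o_{\mathbb{P}}(1)$ for some policy $\pi$ with $1/\pi(a\mid x)<\infty$; $1/\pi^{\mathrm{AIPW}}<C_1$ for some constant $C_1<\infty$; and $\mathrm{Var}(\hat f_{t-1}(a,X_t))<\infty$ for $a\in\{0,1\}$. Then, as $t\to\infty$, $$\mathbb{E} \left[ \left(\hat{f}_{t-1}(1,X_t) - \hat{f}_{t-1}(0,X_t) - \theta_0\right)^2 - \left( f(1,X_t) - f(0,X_t) - \theta_0 \right)^2 ~\Big|~\Omega_{t-1}\right]= o_{\mathbb{P}}(1).$$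
   Context: Data-generating process: subjects $t=1,2,\dots$ arrive sequentially. The tuples $(X_t, Y_t(0), Y_t(1))$, $X_t\in\mathcal{X}$, are i.i.d. over $t$. Let $\Omega_{t-1}=\{(X_s,A_s,Y_s): s\le t-1\}$ be the history. Given $X_t$ and $\Omega_{t-1}$, the treatment $A_t\in\{0,1\}$ is drawn with $\mathbb{P}(A_t=1\mid X_t,\Omega_{t-1})=\pi_t(1\mid X_t,\Omega_{t-1})$, independently of the current potential outcomes; $Y_t = \mathbb{1}[A_t=0]Y_t(0)+\mathbb{1}[A_t=1]Y_t(1)$. The policies are $\pi_t=(\tilde\pi_t\vee 1/k_t)\wedge(1-1/k_t)$ for arbitrary $(0,1)$-valued policies $\tilde\pi_t$ and user-chosen $k_t\in[2,\infty)$. $f(a,x)=\mathbb{E}[Y_t(a)\mid X_t=x]$, $v(a,x)=\mathrm{Var}(Y_t(a)\mid X_t=x)$, $\theta_0=\mathbb{E}[Y(1)-Y(0)]$; $\hat f_t$ is an estimator of $f$ built from $\Omega_t$; $\lVert g\rVert_2^2=\int g(x)^2d\mathbb{P}(x)$. $\pi^{\mathrm{AIPW}}(1\mid x)=\frac{\sqrt{v(1,x)}}{\sqrt{v(1,x)}+\sqrt{v(0,x)}}$, $\pi^{\mathrm{AIPW}}(0\mid x)=1-\pi^{\mathrm{AIPW}}(1\mid x)$. *)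

theory Defs
  imports "HOL-Probability.Probability"
begin

definition tuple :: "(nat \<Rightarrow> 'w \<Rightarrow> 'x) \<Rightarrow> (nat \<Rightarrow> 'w \<Rightarrow> real) \<Rightarrow> (nat \<Rightarrow> 'w \<Rightarrow> real)
    \<Rightarrow> nat \<Rightarrow> 'w \<Rightarrow> 'x \<times> real \<times> real" where
  "tuple X Y0 Y1 t = (\<lambda>\<omega>. (X t \<omega>, Y0 t \<omega>, Y1 t \<omega>))"

definition obs_outcome :: "(nat \<Rightarrow> 'w \<Rightarrow> bool) \<Rightarrow> (nat \<Rightarrow> 'w \<Rightarrow> real) \<Rightarrow> (nat \<Rightarrow> 'w \<Rightarrow> real)
    \<Rightarrow> nat \<Rightarrow> 'w \<Rightarrow> real" where
  "obs_outcome A Y0 Y1 t \<omega> = (if A t \<omega> then Y1 t \<omega> else Y0 t \<omega>)"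

text \<open>History sigma-algebra Omega_n generated by (X_s, A_s, Y_s), 1 <= s <= n
  (subjects are indexed 1,2,...; Omega_0 is trivial).\<close>
definition history :: "'w measure \<Rightarrow> 'x measure \<Rightarrow> (nat \<Rightarrow> 'w \<Rightarrow> 'x) \<Rightarrow> (nat \<Rightarrow> 'w \<Rightarrow> bool)
    \<Rightarrow> (nat \<Rightarrow> 'w \<Rightarrow> real) \<Rightarrow> nat \<Rightarrow> 'w measure" where
  "history M SX X A Y n = sigma (space M)
     (\<Union>s\<in>{1..n}. {(\<lambda>\<omega>. (X s \<omega>, A s \<omega>, Y s \<omega>)) -` B \<inter> space M | B.
        B \<in> sets (SX \<Otimes>\<^sub>M count_space UNIV \<Otimes>\<^sub>M borel)})"

definition pre_treatment :: "'w measure \<Rightarrow> 'x measure \<Rightarrow> (nat \<Rightarrow> 'w \<Rightarrow> 'x) \<Rightarrow> (nat \<Rightarrow> 'w \<Rightarrow> real)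
    \<Rightarrow> (nat \<Rightarrow> 'w \<Rightarrow> real) \<Rightarrow> (nat \<Rightarrow> 'w \<Rightarrow> bool) \<Rightarrow> nat \<Rightarrow> 'w measure" where
  "pre_treatment M SX X Y0 Y1 A t = sigma (space M)
     (sets (history M SX X A (obs_outcome A Y0 Y1) (t - 1)) \<union>
      {tuple X Y0 Y1 t -` B \<inter> space M | B. B \<in> sets (SX \<Otimes>\<^sub>M borel \<Otimes>\<^sub>M borel)})"

definition L2dist :: "'x measure \<Rightarrow> ('x \<Rightarrow> real) \<Rightarrow> ('x \<Rightarrow> real) \<Rightarrow> real" where
  "L2dist P g h = sqrt (\<integral>x. (g x - h x)\<^sup>2 \<partial>P)"

definition op1 :: "'w measure \<Rightarrow> (nat \<Rightarrow> 'w \<Rightarrow> real) \<Rightarrow> bool" where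
  "op1 M Z \<longleftrightarrow> (\<forall>e>0. (\<lambda>t. measure M {\<omega> \<in> space M. e < \<bar>Z t \<omega>\<bar>}) \<longlonglongrightarrow> 0)"

definition trunc :: "real \<Rightarrow> real \<Rightarrow> real" where
  "trunc k p = min (max p (1 / k)) (1 - 1 / k)"

text \<open>pi^AIPW(a|x) from conditional variances v(a,x) (assumed finite).\<close>
definition pi_aipw :: "(bool \<Rightarrow> 'x \<Rightarrow> ennreal) \<Rightarrow> bool \<Rightarrow> 'x \<Rightarrow> real" where
  "pi_aipw v a x =
     (let s1 = sqrt (enn2real (v True x)); s0 = sqrt (enn2real (v False x))
      in if a then s1 / (s1 + s0) else 1 - s1 / (s1 + s0))"

end

theory Submission
  imports Defs
begin

(*
  Since X_(n+1) is independent of the history Omega_n and fhat_n is Omega_n-measurable, the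
  conditional expectation given Omega_n is the P_X-integral of the integrand with fhat_n frozen
  (freezing lemma). With e = (fhat_1 - f_1) - (fhat_0 - f_0) and g = f_1 - f_0 - theta0 the
  integrand is e^2 + 2 e g, which AM-GM bounds by 2 (1 + 1/d) ((fhat_1 - f_1)^2 + (fhat_0 - f_0)^2)
  + d g^2 for every d > 0. The norm of g in L2(P_X) is finite: the regression functions inherit
  square integrability from the potential outcomes, and these inherit it from Y_t because the
  truncated propensities stay in [1/k_t, 1 - 1/k_t]. As k_t >= 2, the rate assumption makes the
  L2(P_X) errors of fhat_n o_P(1), and d is arbitrary.

  The propensity rate, the bound on pi^AIPW, the variances v and the value of theta0 play no role.
*)

lemma power2_contrast_diff_le:
  fixes p1 p0 q1 q0 c d :: real
  assumes "0 < d"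
  shows "\<bar>(p1 - p0 - c)\<^sup>2 - (q1 - q0 - c)\<^sup>2\<bar>
     \<le> 2 * (1 + 1/d) * ((p1 - q1)\<^sup>2 + (p0 - q0)\<^sup>2) + d * (q1 - q0 - c)\<^sup>2"
proof -
  define e where "e = (p1 - q1) - (p0 - q0)"
  define g where "g = q1 - q0 - c"
  have split: "(p1 - p0 - c)\<^sup>2 - (q1 - q0 - c)\<^sup>2 = e\<^sup>2 + 2 * e * g"
    unfolding e_def g_def by (simp add: power2_eq_square algebra_simps)
  have e_le: "e\<^sup>2 \<le> 2 * ((p1 - q1)\<^sup>2 + (p0 - q0)\<^sup>2)"
    using zero_le_power2[of "(p1 - q1) + (p0 - q0)"] unfolding e_def
    by (simp add: power2_eq_square algebra_simps)
  have am_gm: "2 * \<bar>e * g\<bar> \<le> e\<^sup>2 / d + d * g\<^sup>2"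
  proof -
    have "0 \<le> (\<bar>e\<bar> / sqrt d - sqrt d * \<bar>g\<bar>)\<^sup>2" by simp
    also have "\<dots> = e\<^sup>2 / d + d * g\<^sup>2 - 2 * \<bar>e * g\<bar>"
      using assms by (simp add: power2_eq_square field_simps abs_mult)
    finally show ?thesis by simp
  qed
  have "\<bar>e\<^sup>2 + 2 * e * g\<bar> \<le> e\<^sup>2 + 2 * \<bar>e * g\<bar>"
    using abs_triangle_ineq[of "e\<^sup>2" "2 * e * g"] by (simp add: abs_mult)
  also have "\<dots> \<le> (1 + 1/d) * e\<^sup>2 + d * g\<^sup>2"
    using am_gm by (simp add: algebra_simps)
  also have "\<dots> \<le> (1 + 1/d) * (2 * ((p1 - q1)\<^sup>2 + (p0 - q0)\<^sup>2)) + d * g\<^sup>2"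
    using e_le assms by (intro add_right_mono mult_left_mono) auto
  finally show ?thesis
    unfolding split g_def by (simp add: algebra_simps)
qed

lemma integrable_power2_diff:
  fixes u w :: "'a \<Rightarrow> real"
  assumes [measurable]: "u \<in> borel_measurable M" "w \<in> borel_measurable M"
    and "integrable M (\<lambda>x. (u x)\<^sup>2)" "integrable M (\<lambda>x. (w x)\<^sup>2)"
  shows "integrable M (\<lambda>x. (u x - w x)\<^sup>2)"
proof (rule Bochner_Integration.integrable_bound)
  show "integrable M (\<lambda>x. 2 * (u x)\<^sup>2 + 2 * (w x)\<^sup>2)"
    using assms by auto
  show "AE x in M. norm ((u x - w x)\<^sup>2) \<le> norm (2 * (u x)\<^sup>2 + 2 * (w x)\<^sup>2)"
  proof (rule AE_I2)
    fix x
    have "(u x - w x)\<^sup>2 \<le> 2 * (u x)\<^sup>2 + 2 * (w x)\<^sup>2"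
      using zero_le_power2[of "u x + w x"] by (simp add: power2_eq_square algebra_simps)
    then show "norm ((u x - w x)\<^sup>2) \<le> norm (2 * (u x)\<^sup>2 + 2 * (w x)\<^sup>2)"
      by simp
  qed
qed simp

lemma (in finite_measure) integrable_power2_contrast:
  fixes p1 p0 :: "'a \<Rightarrow> real"
  assumes [measurable]: "p1 \<in> borel_measurable M" "p0 \<in> borel_measurable M"
    and "integrable M (\<lambda>x. (p1 x)\<^sup>2)" "integrable M (\<lambda>x. (p0 x)\<^sup>2)"
  shows "integrable M (\<lambda>x. (p1 x - p0 x - c)\<^sup>2)"
  using assms by (intro integrable_power2_diff integrable_power2_diff[of p1 M p0]) auto

lemma (in finite_measure) integral_power2_contrast_diff_le:
  fixes p1 p0 q1 q0 :: "'a \<Rightarrow> real"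
  assumes [measurable]: "p1 \<in> borel_measurable M" "p0 \<in> borel_measurable M"
      "q1 \<in> borel_measurable M" "q0 \<in> borel_measurable M"
    and L2: "integrable M (\<lambda>x. (p1 x)\<^sup>2)" "integrable M (\<lambda>x. (p0 x)\<^sup>2)"
      "integrable M (\<lambda>x. (q1 x)\<^sup>2)" "integrable M (\<lambda>x. (q0 x)\<^sup>2)"
    and "0 < d"
  shows "\<bar>\<integral>x. (p1 x - p0 x - c)\<^sup>2 - (q1 x - q0 x - c)\<^sup>2 \<partial>M\<bar>
     \<le> 2 * (1 + 1/d) * ((\<integral>x. (p1 x - q1 x)\<^sup>2 \<partial>M) + (\<integral>x. (p0 x - q0 x)\<^sup>2 \<partial>M))
        + d * (\<integral>x. (q1 x - q0 x - c)\<^sup>2 \<partial>M)"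
proof -
  have int: "integrable M (\<lambda>x. (p1 x - p0 x - c)\<^sup>2)" "integrable M (\<lambda>x. (q1 x - q0 x - c)\<^sup>2)"
      "integrable M (\<lambda>x. (p1 x - q1 x)\<^sup>2)" "integrable M (\<lambda>x. (p0 x - q0 x)\<^sup>2)"
    using L2 by (auto intro: integrable_power2_contrast integrable_power2_diff)
  have "\<bar>\<integral>x. (p1 x - p0 x - c)\<^sup>2 - (q1 x - q0 x - c)\<^sup>2 \<partial>M\<bar>
      \<le> (\<integral>x. \<bar>(p1 x - p0 x - c)\<^sup>2 - (q1 x - q0 x - c)\<^sup>2\<bar> \<partial>M)"
    by (rule integral_abs_bound)
  also have "\<dots> \<le> (\<integral>x. 2 * (1 + 1/d) * ((p1 x - q1 x)\<^sup>2 + (p0 x - q0 x)\<^sup>2)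
                        + d * (q1 x - q0 x - c)\<^sup>2 \<partial>M)"
    using int \<open>0 < d\<close> by (intro integral_mono power2_contrast_diff_le) auto
  also have "\<dots> = 2 * (1 + 1/d) * ((\<integral>x. (p1 x - q1 x)\<^sup>2 \<partial>M) + (\<integral>x. (p0 x - q0 x)\<^sup>2 \<partial>M))
        + d * (\<integral>x. (q1 x - q0 x - c)\<^sup>2 \<partial>M)"
    using int by simp
  finally show ?thesis .
qed

lemma subalgebra_measurable_ident: "subalgebra M F \<Longrightarrow> (\<lambda>x. x) \<in> M \<rightarrow>\<^sub>M F"
  unfolding subalgebra_def measurable_def by (auto dest: sets.sets_into_space)

lemma (in prob_space) distr_Pair_indep:
  assumes sub: "subalgebra M F" and X: "X \<in> M \<rightarrow>\<^sub>M S"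
    and indep: "indep_set (sets F) (sets (vimage_algebra (space M) X S))"
  shows "distr M (F \<Otimes>\<^sub>M S) (\<lambda>\<omega>. (\<omega>, X \<omega>)) = distr M F (\<lambda>\<omega>. \<omega>) \<Otimes>\<^sub>M distr M S X"
proof -
  have id: "(\<lambda>\<omega>. \<omega>) \<in> M \<rightarrow>\<^sub>M F" by (rule subalgebra_measurable_ident[OF sub])
  have pair: "(\<lambda>\<omega>. (\<omega>, X \<omega>)) \<in> M \<rightarrow>\<^sub>M F \<Otimes>\<^sub>M S" by (rule measurable_Pair[OF id X])
  interpret MF: prob_space "distr M F (\<lambda>\<omega>. \<omega>)" by (rule prob_space_distr[OF id])
  interpret MS: prob_space "distr M S X" by (rule prob_space_distr[OF X])
  show ?thesis
  proof (rule pair_measure_eqI[symmetric])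
    fix A B assume A: "A \<in> sets (distr M F (\<lambda>\<omega>. \<omega>))" and B: "B \<in> sets (distr M S X)"
    have AM: "A \<subseteq> space M" using A sub sets.sets_into_space by (force simp: subalgebra_def)
    have "emeasure (distr M (F \<Otimes>\<^sub>M S) (\<lambda>\<omega>. (\<omega>, X \<omega>))) (A \<times> B) = emeasure M (A \<inter> (X -` B \<inter> space M))"
      using A B AM by (subst emeasure_distr[OF pair]) (auto intro!: arg_cong[where f="emeasure M"])
    also have "\<dots> = emeasure M A * emeasure M (X -` B \<inter> space M)"
      using indep_setD[OF indep, of A "X -` B \<inter> space M"] A B
      by (simp add: emeasure_eq_measure in_vimage_algebra ennreal_mult)
    also have "\<dots> = emeasure (distr M F (\<lambda>\<omega>. \<omega>)) A * emeasure (distr M S X) B"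
      using A B AM id X by (simp add: emeasure_distr Int_absorb2)
    finally show "emeasure (distr M F (\<lambda>\<omega>. \<omega>)) A * emeasure (distr M S X) B
        = emeasure (distr M (F \<Otimes>\<^sub>M S) (\<lambda>\<omega>. (\<omega>, X \<omega>))) (A \<times> B)" by simp
  qed (simp_all add: MF.sigma_finite_measure MS.sigma_finite_measure)
qed

lemma (in prob_space)
  fixes K :: "'a \<times> 'b \<Rightarrow> real"
  assumes sub: "subalgebra M F" and X: "X \<in> M \<rightarrow>\<^sub>M S"
    and indep: "indep_set (sets F) (sets (vimage_algebra (space M) X S))"
    and K: "K \<in> borel_measurable (F \<Otimes>\<^sub>M S)" and int: "integrable M (\<lambda>\<omega>. K (\<omega>, X \<omega>))"
  shows AE_integrable_freeze: "AE \<omega> in M. integrable (distr M S X) (\<lambda>x. K (\<omega>, x))"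
    and real_cond_exp_freeze:
      "AE \<omega> in M. real_cond_exp M F (\<lambda>\<omega>. K (\<omega>, X \<omega>)) \<omega> = (\<integral>x. K (\<omega>, x) \<partial>distr M S X)"
proof -
  let ?MF = "distr M F (\<lambda>\<omega>. \<omega>)" and ?P = "distr M S X"
  have id: "(\<lambda>\<omega>. \<omega>) \<in> M \<rightarrow>\<^sub>M F" by (rule subalgebra_measurable_ident[OF sub])
  have pair: "(\<lambda>\<omega>. (\<omega>, X \<omega>)) \<in> M \<rightarrow>\<^sub>M F \<Otimes>\<^sub>M S" by (rule measurable_Pair[OF id X])
  interpret MF: prob_space ?MF by (rule prob_space_distr[OF id])
  interpret N: prob_space ?P by (rule prob_space_distr[OF X])
  interpret FN: pair_prob_space ?MF ?P ..
  interpret F: finite_measure_subalgebra M F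
    by unfold_locales (rule sub)
  have K_int: "integrable (?MF \<Otimes>\<^sub>M ?P) K"
    using int integrable_distr_eq[OF pair K] distr_Pair_indep[OF sub X indep] by simp
  show "AE \<omega> in M. integrable ?P (\<lambda>x. K (\<omega>, x))"
    by (rule AE_distrD[OF id FN.AE_integrable_fst'[OF K_int]])
  define Phi where "Phi \<omega> = (\<integral>x. K (\<omega>, x) \<partial>?P)" for \<omega>
  have Phi_meas: "Phi \<in> borel_measurable F"
    unfolding Phi_def using K by (intro N.borel_measurable_lebesgue_integral) (simp cong: measurable_cong_sets)
  have "integrable ?MF Phi"
    unfolding Phi_def by (rule FN.integrable_fst'[OF K_int])
  then have Phi_int: "integrable M Phi"
    by (simp add: integrable_distr_eq[OF id Phi_meas])
  show "AE \<omega> in M. real_cond_exp M F (\<lambda>\<omega>. K (\<omega>, X \<omega>)) \<omega> = (\<integral>x. K (\<omega>, x) \<partial>?P)"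
    unfolding Phi_def[symmetric]
  proof (rule F.real_cond_exp_charact)
    fix A assume A: "A \<in> sets F"
    have K_A: "(\<lambda>p. indicator A (fst p) * K p) \<in> borel_measurable (F \<Otimes>\<^sub>M S)"
      using A K by measurable
    have int_A: "integrable (?MF \<Otimes>\<^sub>M ?P) (\<lambda>p. indicator A (fst p) * K p)"
      using K_int by (rule Bochner_Integration.integrable_bound)
        (use K_A in \<open>auto simp: indicator_def cong: measurable_cong_sets\<close>)
    have "(\<integral>\<omega>\<in>A. K (\<omega>, X \<omega>) \<partial>M) = (\<integral>\<omega>. indicator A (fst (\<omega>, X \<omega>)) * K (\<omega>, X \<omega>) \<partial>M)"
      by (simp add: set_lebesgue_integral_def)
    also have "\<dots> = (\<integral>p. indicator A (fst p) * K p \<partial>(?MF \<Otimes>\<^sub>M ?P))"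
      using integral_distr[OF pair K_A] distr_Pair_indep[OF sub X indep] by simp
    also have "\<dots> = (\<integral>\<omega>. indicator A \<omega> * Phi \<omega> \<partial>?MF)"
      using FN.integral_fst'[OF int_A] by (simp add: Phi_def)
    also have "\<dots> = (\<integral>\<omega>. indicator A \<omega> * Phi \<omega> \<partial>M)"
      by (rule integral_distr[OF id]) (use A Phi_meas in measurable)
    finally show "(\<integral>\<omega>\<in>A. K (\<omega>, X \<omega>) \<partial>M) = (\<integral>\<omega>\<in>A. Phi \<omega> \<partial>M)"
      by (simp add: set_lebesgue_integral_def)
  qed (use int Phi_int Phi_meas in auto)
qed

lemma (in prob_space) real_cond_exp_power2_contrast_diff_le:
  fixes X :: "'a \<Rightarrow> 'b" and S :: "'b measure"
    and p1 p0 :: "'a \<Rightarrow> 'b \<Rightarrow> real" and q1 q0 :: "'b \<Rightarrow> real"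
  defines "P \<equiv> distr M S X"
  assumes sub: "subalgebra M F" and X [measurable]: "X \<in> M \<rightarrow>\<^sub>M S"
    and indep: "indep_set (sets F) (sets (vimage_algebra (space M) X S))"
    and p_meas: "(\<lambda>(\<omega>, x). p1 \<omega> x) \<in> borel_measurable (F \<Otimes>\<^sub>M S)"
      "(\<lambda>(\<omega>, x). p0 \<omega> x) \<in> borel_measurable (F \<Otimes>\<^sub>M S)"
    and [measurable]: "q1 \<in> borel_measurable S" "q0 \<in> borel_measurable S"
    and p_L2: "integrable M (\<lambda>\<omega>. (p1 \<omega> (X \<omega>))\<^sup>2)" "integrable M (\<lambda>\<omega>. (p0 \<omega> (X \<omega>))\<^sup>2)"
    and q_L2: "integrable P (\<lambda>x. (q1 x)\<^sup>2)" "integrable P (\<lambda>x. (q0 x)\<^sup>2)"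
    and "0 < d"
  shows "AE \<omega> in M. \<bar>real_cond_exp M F
           (\<lambda>\<omega>. (p1 \<omega> (X \<omega>) - p0 \<omega> (X \<omega>) - c)\<^sup>2 - (q1 (X \<omega>) - q0 (X \<omega>) - c)\<^sup>2) \<omega>\<bar>
     \<le> 2 * (1 + 1/d) * ((\<integral>x. (p1 \<omega> x - q1 x)\<^sup>2 \<partial>P) + (\<integral>x. (p0 \<omega> x - q0 x)\<^sup>2 \<partial>P))
        + d * (\<integral>x. (q1 x - q0 x - c)\<^sup>2 \<partial>P)"
proof -
  interpret P: prob_space P unfolding P_def by (rule prob_space_distr[OF X])
  have [measurable]: "(\<lambda>z. p1 (fst z) (snd z)) \<in> borel_measurable (F \<Otimes>\<^sub>M S)"
      "(\<lambda>z. p0 (fst z) (snd z)) \<in> borel_measurable (F \<Otimes>\<^sub>M S)"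
    using p_meas by (simp_all add: split_beta')
  have pair: "(\<lambda>\<omega>. (\<omega>, X \<omega>)) \<in> M \<rightarrow>\<^sub>M F \<Otimes>\<^sub>M S"
    by (rule measurable_Pair[OF subalgebra_measurable_ident[OF sub] X])
  have [measurable]: "(\<lambda>\<omega>. p1 \<omega> (X \<omega>)) \<in> borel_measurable M" "(\<lambda>\<omega>. p0 \<omega> (X \<omega>)) \<in> borel_measurable M"
    using measurable_compose[OF pair, of "\<lambda>z. p1 (fst z) (snd z)"]
      measurable_compose[OF pair, of "\<lambda>z. p0 (fst z) (snd z)"] by simp_all
  have q_L2_M: "integrable M (\<lambda>\<omega>. (q1 (X \<omega>))\<^sup>2)" "integrable M (\<lambda>\<omega>. (q0 (X \<omega>))\<^sup>2)"
    using q_L2 unfolding P_def by (simp_all add: integrable_distr_eq)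
  let ?K = "\<lambda>z. (p1 (fst z) (snd z) - p0 (fst z) (snd z) - c)\<^sup>2 - (q1 (snd z) - q0 (snd z) - c)\<^sup>2"
  have "integrable M (\<lambda>\<omega>. ?K (\<omega>, X \<omega>))"
    using p_L2 q_L2_M by (auto intro!: integrable_power2_contrast)
  then have freeze: "AE \<omega> in M. real_cond_exp M F (\<lambda>\<omega>. ?K (\<omega>, X \<omega>)) \<omega> = (\<integral>x. ?K (\<omega>, x) \<partial>P)"
    unfolding P_def by (intro real_cond_exp_freeze[OF sub X indep]) measurable
  have sections_L2: "AE \<omega> in M. integrable P (\<lambda>x. (p1 \<omega> x)\<^sup>2) \<and> integrable P (\<lambda>x. (p0 \<omega> x)\<^sup>2)"
    using AE_integrable_freeze[OF sub X indep, of "\<lambda>z. (p1 (fst z) (snd z))\<^sup>2"]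
      AE_integrable_freeze[OF sub X indep, of "\<lambda>z. (p0 (fst z) (snd z))\<^sup>2"] p_L2
    unfolding P_def by auto
  show ?thesis
    using freeze sections_L2 AE_space
  proof eventually_elim
    case (elim \<omega>)
    have "\<omega> \<in> space F" using elim sub by (simp add: subalgebra_def)
    then have sections: "p1 \<omega> \<in> borel_measurable P" "p0 \<omega> \<in> borel_measurable P"
      using measurable_Pair2[of "\<lambda>z. p1 (fst z) (snd z)" F S] measurable_Pair2[of "\<lambda>z. p0 (fst z) (snd z)" F S]
      unfolding P_def by auto
    show ?case
      using elim P.integral_power2_contrast_diff_le[OF sections, of q1 q0 d c] q_L2 \<open>0 < d\<close>
      by (simp add: P_def)
  qed
qed

lemma (in sigma_finite_subalgebra) integrable_from_cond_exp_lower_bound: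
  fixes g h :: "'a \<Rightarrow> real"
  assumes [measurable]: "g \<in> borel_measurable M" and g_nonneg: "\<And>x. 0 \<le> g x"
    and "0 < d" and g_cond: "AE x in M. d \<le> real_cond_exp M F g x"
    and h_meas [measurable]: "h \<in> borel_measurable F" and h_nonneg: "\<And>x. 0 \<le> h x"
    and "integrable M (\<lambda>x. h x * g x)"
  shows "integrable M h"
proof -
  have [measurable]: "h \<in> borel_measurable M" by (rule measurable_from_subalg[OF subalg h_meas])
  have "AE x in M. nn_cond_exp M F (\<lambda>x. 0) x = 0"
    using nn_cond_exp_F_meas[of "\<lambda>x. 0"] by (auto elim: eventually_mono)
  moreover have "(\<lambda>x. ennreal (- g x)) = (\<lambda>x. 0)" using g_nonneg by (simp add: ennreal_neg)
  ultimately have "AE x in M. real_cond_exp M F g x = enn2real (nn_cond_exp M F (\<lambda>x. ennreal (g x)) x)"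
    by (auto simp: real_cond_exp_def elim!: eventually_mono)
  with g_cond have lower: "AE x in M. ennreal d \<le> nn_cond_exp M F (\<lambda>x. ennreal (g x)) x"
    by eventually_elim (metis ennreal_enn2real_if ennreal_leI order.trans top_greatest)
  have "ennreal d * (\<integral>\<^sup>+x. ennreal (h x) \<partial>M) = (\<integral>\<^sup>+x. ennreal (h x) * ennreal d \<partial>M)"
    by (simp add: nn_integral_cmult mult.commute)
  also have "\<dots> \<le> (\<integral>\<^sup>+x. ennreal (h x) * nn_cond_exp M F (\<lambda>x. ennreal (g x)) x \<partial>M)"
    using lower by (intro nn_integral_mono_AE) (auto elim!: eventually_mono intro: mult_left_mono)
  also have "\<dots> = (\<integral>\<^sup>+x. ennreal (h x) * ennreal (g x) \<partial>M)"
    by (rule nn_cond_exp_intg) measurable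
  also have "\<dots> = (\<integral>\<^sup>+x. ennreal (norm (h x * g x)) \<partial>M)"
    using h_nonneg g_nonneg by (simp add: ennreal_mult)
  also have "\<dots> < \<infinity>"
    using \<open>integrable M (\<lambda>x. h x * g x)\<close> by (simp add: integrable_iff_bounded)
  finally have "(\<integral>\<^sup>+x. ennreal (h x) \<partial>M) < \<infinity>"
    using \<open>0 < d\<close> by (auto simp: ennreal_mult_less_top top.not_eq_extremum)
  then show ?thesis
    using h_nonneg by (intro integrableI_bounded) auto
qed

lemma (in prob_space) square_integrable_regression_function:
  assumes [measurable]: "X \<in> M \<rightarrow>\<^sub>M S" "Y \<in> borel_measurable M" "f \<in> borel_measurable S"
    and Y_L2: "integrable M (\<lambda>\<omega>. (Y \<omega>)\<^sup>2)"
    and regression: "AE \<omega> in M. real_cond_exp M (vimage_algebra (space M) X S) Y \<omega> = f (X \<omega>)"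
  shows "integrable (distr M S X) (\<lambda>x. (f x)\<^sup>2)"
proof -
  let ?F = "vimage_algebra (space M) X S"
  have "subalgebra M ?F"
    using measurable_space[OF assms(1)] measurable_sets[OF assms(1)]
    by (auto simp: subalgebra_def sets_vimage_algebra2 Pi_iff)
  then interpret F: finite_measure_subalgebra M ?F
    by unfold_locales
  have "integrable M (\<lambda>\<omega>. (real_cond_exp M ?F Y \<omega>)\<^sup>2)"
    using Y_L2 square_integrable_imp_integrable[OF _ Y_L2]
    by (intro F.integrable_convex_cond_exp[where I=UNIV]) (auto intro: convex_power2)
  then have "integrable M (\<lambda>\<omega>. (f (X \<omega>))\<^sup>2)"
    by (rule integrable_cong_AE_imp) (use regression in \<open>auto elim: eventually_mono\<close>)
  then show ?thesis
    by (simp add: integrable_distr_eq)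
qed

lemma (in prob_space) indep_set_vimage_algebra_comp:
  assumes indep: "indep_set A (sets (vimage_algebra (space M) T N))"
    and g: "g \<in> N \<rightarrow>\<^sub>M S" and T: "T \<in> space M \<rightarrow> space N"
  shows "indep_set A (sets (vimage_algebra (space M) (\<lambda>\<omega>. g (T \<omega>)) S))"
proof -
  have "sets (vimage_algebra (space M) (\<lambda>\<omega>. g (T \<omega>)) S) \<subseteq> sets (vimage_algebra (space M) T N)"
  proof (rule sets_image_in_sets')
    fix B assume "B \<in> sets S"
    then have "T -` (g -` B \<inter> space N) \<inter> space M \<in> sets (vimage_algebra (space M) T N)"
      using g by (intro in_vimage_algebra) measurable
    moreover have "T -` (g -` B \<inter> space N) \<inter> space M = (\<lambda>\<omega>. g (T \<omega>)) -` B \<inter> space M"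
      using T by auto
    ultimately show "(\<lambda>\<omega>. g (T \<omega>)) -` B \<inter> space M \<in> sets (vimage_algebra (space M) T N)" by simp
  qed (rule sets_vimage_algebra_space)
  with indep show ?thesis
    by (auto simp: indep_sets2_eq)
qed

lemma op1_dominated:
  assumes "prob_space M" and W_meas: "\<And>n. W n \<in> borel_measurable M" and W: "op1 M W"
    and dom: "\<And>d n. 0 < d \<Longrightarrow> AE \<omega> in M. \<bar>Z n \<omega>\<bar> \<le> c d * \<bar>W n \<omega>\<bar> + d * G"
  shows "op1 M Z"
  unfolding op1_def
proof (intro allI impI)
  interpret prob_space M by fact
  fix e :: real assume "0 < e"
  define B where "B = \<bar>G\<bar> + 1"
  define d where "d = e / (2 * B)"
  define C where "C = max (c d) 1"
  have "0 < B" "0 < d" "0 < C" using \<open>0 < e\<close> by (simp_all add: B_def d_def C_def add_pos_nonneg)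
  have "d * G \<le> d * B" using \<open>0 < d\<close> by (intro mult_left_mono) (auto simp: B_def)
  also have "\<dots> = e / 2" using \<open>0 < B\<close> by (simp add: d_def)
  finally have dG: "d * G \<le> e / 2" .
  let ?W_large = "\<lambda>n. {\<omega> \<in> space M. e / (2 * C) < \<bar>W n \<omega>\<bar>}"
  have bound: "measure M {\<omega> \<in> space M. e < \<bar>Z n \<omega>\<bar>} \<le> measure M (?W_large n)" for n
  proof (rule finite_measure_mono_AE)
    show "AE \<omega> in M. \<omega> \<in> {\<omega> \<in> space M. e < \<bar>Z n \<omega>\<bar>} \<longrightarrow> \<omega> \<in> ?W_large n"
      using dom[OF \<open>0 < d\<close>, of n]
    proof eventually_elim
      case (elim \<omega>)
      have "c d * \<bar>W n \<omega>\<bar> \<le> C * \<bar>W n \<omega>\<bar>" by (simp add: C_def mult_right_mono)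
      show ?case
      proof
        assume "\<omega> \<in> {\<omega> \<in> space M. e < \<bar>Z n \<omega>\<bar>}"
        with elim dG \<open>c d * \<bar>W n \<omega>\<bar> \<le> C * \<bar>W n \<omega>\<bar>\<close>
        have "\<omega> \<in> space M" "e < \<bar>W n \<omega>\<bar> * (2 * C)"
          by (auto simp: algebra_simps)
        with \<open>0 < C\<close> show "\<omega> \<in> ?W_large n" by (simp add: pos_divide_less_eq)
      qed
    qed
  qed (use W_meas in measurable)
  have "(\<lambda>n. measure M (?W_large n)) \<longlonglongrightarrow> 0"
    using W[unfolded op1_def, rule_format, of "e / (2 * C)"] \<open>0 < e\<close> \<open>0 < C\<close> by simp
  then show "(\<lambda>n. measure M {\<omega> \<in> space M. e < \<bar>Z n \<omega>\<bar>}) \<longlonglongrightarrow> 0"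
    by (rule Lim_null_comparison[OF always_eventually, rotated]) (use bound in auto)
qed

lemma op1_add:
  assumes "prob_space M" and meas: "\<And>n. U n \<in> borel_measurable M" "\<And>n. V n \<in> borel_measurable M"
    and U: "op1 M U" and V: "op1 M V"
  shows "op1 M (\<lambda>n \<omega>. U n \<omega> + V n \<omega>)"
  unfolding op1_def
proof (intro allI impI)
  interpret prob_space M by fact
  fix e :: real assume "0 < e"
  let ?U_large = "\<lambda>n. {\<omega> \<in> space M. e / 2 < \<bar>U n \<omega>\<bar>}"
    and ?V_large = "\<lambda>n. {\<omega> \<in> space M. e / 2 < \<bar>V n \<omega>\<bar>}"
  have "measure M {\<omega> \<in> space M. e < \<bar>U n \<omega> + V n \<omega>\<bar>} \<le> measure M (?U_large n \<union> ?V_large n)" for n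
    by (rule finite_measure_mono) (use meas in auto)
  moreover have "measure M (?U_large n \<union> ?V_large n) \<le> measure M (?U_large n) + measure M (?V_large n)" for n
    by (rule measure_subadditive) (use meas in auto)
  ultimately have bound: "measure M {\<omega> \<in> space M. e < \<bar>U n \<omega> + V n \<omega>\<bar>}
      \<le> measure M (?U_large n) + measure M (?V_large n)" for n
    by (meson order.trans)
  have "(\<lambda>n. measure M (?U_large n) + measure M (?V_large n)) \<longlonglongrightarrow> 0"
    using tendsto_add[OF U[unfolded op1_def, rule_format, of "e / 2"] V[unfolded op1_def, rule_format, of "e / 2"]]
      \<open>0 < e\<close> by simp
  then show "(\<lambda>n. measure M {\<omega> \<in> space M. e < \<bar>U n \<omega> + V n \<omega>\<bar>}) \<longlonglongrightarrow> 0"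
    by (rule Lim_null_comparison[OF always_eventually, rotated]) (use bound in auto)
qed

lemma op1_power2:
  assumes "op1 M U"
  shows "op1 M (\<lambda>n \<omega>. (U n \<omega>)\<^sup>2)"
  unfolding op1_def
proof (intro allI impI)
  fix e :: real assume "0 < e"
  have "e < \<bar>u\<^sup>2\<bar> \<longleftrightarrow> sqrt e < \<bar>u\<bar>" for u :: real
    using \<open>0 < e\<close> by (metis abs_power2 real_sqrt_abs real_sqrt_less_iff)
  then show "(\<lambda>n. measure M {\<omega> \<in> space M. e < \<bar>(U n \<omega>)\<^sup>2\<bar>}) \<longlonglongrightarrow> 0"
    using assms \<open>0 < e\<close> unfolding op1_def by simp
qed

lemma power2_L2dist: "(L2dist P g h)\<^sup>2 = (\<integral>x. (g x - h x)\<^sup>2 \<partial>P)"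
  by (simp add: L2dist_def)

lemma borel_measurable_L2dist:
  assumes "subalgebra M F" and "prob_space P" and "sets P = sets S"
    and "(\<lambda>(\<omega>, x). g \<omega> x) \<in> borel_measurable (F \<Otimes>\<^sub>M S)" and "h \<in> borel_measurable S"
  shows "(\<lambda>\<omega>. L2dist P (g \<omega>) h) \<in> borel_measurable M"
proof -
  interpret P: prob_space P by fact
  have "(\<lambda>(\<omega>, x). (g \<omega> x - h x)\<^sup>2) \<in> borel_measurable (F \<Otimes>\<^sub>M P)"
    using assms(3-5) by (simp add: split_beta' cong: measurable_cong_sets)
  then have "(\<lambda>\<omega>. \<integral>x. (g \<omega> x - h x)\<^sup>2 \<partial>P) \<in> borel_measurable F"
    by (rule P.borel_measurable_lebesgue_integral)
  from measurable_from_subalg[OF assms(1) this] show ?thesis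
    unfolding L2dist_def by measurable
qed

lemma trunc_bounds: "2 \<le> k \<Longrightarrow> 1 / k \<le> trunc k p \<and> trunc k p \<le> 1 - 1 / k"
  by (auto simp: trunc_def field_simps)

lemma subalgebra_sigma: "G \<subseteq> sets M \<Longrightarrow> subalgebra M (sigma (space M) G)"
  using sets.sets_into_space sets.sigma_sets_subset[of G M]
  by (auto simp: subalgebra_def sets_measure_of_conv space_measure_of_conv)

lemma history_subalgebra:
  assumes "\<forall>s. X s \<in> M \<rightarrow>\<^sub>M SX" "\<forall>s. A s \<in> M \<rightarrow>\<^sub>M count_space UNIV" "\<forall>s. Y s \<in> borel_measurable M"
  shows "subalgebra M (history M SX X A Y n)"
  unfolding history_def
proof (rule subalgebra_sigma, safe)
  fix s and B :: "('b \<times> bool \<times> real) set"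
  assume "B \<in> sets (SX \<Otimes>\<^sub>M count_space UNIV \<Otimes>\<^sub>M borel)"
  moreover have "(\<lambda>\<omega>. (X s \<omega>, A s \<omega>, Y s \<omega>)) \<in> M \<rightarrow>\<^sub>M SX \<Otimes>\<^sub>M count_space UNIV \<Otimes>\<^sub>M borel"
    using assms by (auto intro!: measurable_Pair)
  ultimately show "(\<lambda>\<omega>. (X s \<omega>, A s \<omega>, Y s \<omega>)) -` B \<inter> space M \<in> sets M"
    by (rule measurable_sets[rotated])
qed

lemma measurable_obs_outcome:
  assumes [measurable]: "A t \<in> M \<rightarrow>\<^sub>M count_space UNIV" "Y0 t \<in> borel_measurable M" "Y1 t \<in> borel_measurable M"
  shows "obs_outcome A Y0 Y1 t \<in> borel_measurable M"
  unfolding obs_outcome_def[abs_def] by measurable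

lemma measurable_tuple:
  assumes [measurable]: "X t \<in> M \<rightarrow>\<^sub>M SX" "Y0 t \<in> borel_measurable M" "Y1 t \<in> borel_measurable M"
  shows "tuple X Y0 Y1 t \<in> M \<rightarrow>\<^sub>M SX \<Otimes>\<^sub>M borel \<Otimes>\<^sub>M borel"
  unfolding tuple_def by measurable

lemma
  assumes X: "\<forall>s. X s \<in> M \<rightarrow>\<^sub>M SX" and A: "\<forall>s. A s \<in> M \<rightarrow>\<^sub>M count_space UNIV"
    and Y0: "\<forall>s. Y0 s \<in> borel_measurable M" and Y1: "\<forall>s. Y1 s \<in> borel_measurable M"
  shows pre_treatment_subalgebra: "subalgebra M (pre_treatment M SX X Y0 Y1 A t)"
    and measurable_tuple_pre_treatment:
      "tuple X Y0 Y1 t \<in> pre_treatment M SX X Y0 Y1 A t \<rightarrow>\<^sub>M SX \<Otimes>\<^sub>M borel \<Otimes>\<^sub>M borel"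
proof -
  let ?H = "history M SX X A (obs_outcome A Y0 Y1) (t - 1)"
  let ?G = "sets ?H \<union> {tuple X Y0 Y1 t -` B \<inter> space M | B. B \<in> sets (SX \<Otimes>\<^sub>M borel \<Otimes>\<^sub>M borel)}"
  have tuple: "tuple X Y0 Y1 t \<in> M \<rightarrow>\<^sub>M SX \<Otimes>\<^sub>M borel \<Otimes>\<^sub>M borel"
    using X Y0 Y1 by (intro measurable_tuple) auto
  have "subalgebra M ?H"
    using X A Y0 Y1 by (intro history_subalgebra allI measurable_obs_outcome) auto
  then have G: "?G \<subseteq> sets M"
    using measurable_sets[OF tuple] by (auto simp: subalgebra_def)
  then show sub: "subalgebra M (pre_treatment M SX X Y0 Y1 A t)"
    unfolding pre_treatment_def by (rule subalgebra_sigma)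
  have sets_pre: "sets (pre_treatment M SX X Y0 Y1 A t) = sigma_sets (space M) ?G"
    using G sets.sets_into_space unfolding pre_treatment_def by (intro sets_measure_of) blast
  show "tuple X Y0 Y1 t \<in> pre_treatment M SX X Y0 Y1 A t \<rightarrow>\<^sub>M SX \<Otimes>\<^sub>M borel \<Otimes>\<^sub>M borel"
  proof (rule measurableI)
    show "tuple X Y0 Y1 t \<omega> \<in> space (SX \<Otimes>\<^sub>M borel \<Otimes>\<^sub>M borel)"
      if "\<omega> \<in> space (pre_treatment M SX X Y0 Y1 A t)" for \<omega>
      using that sub measurable_space[OF tuple] by (simp add: subalgebra_def)
    show "tuple X Y0 Y1 t -` B \<inter> space (pre_treatment M SX X Y0 Y1 A t) \<in> sets (pre_treatment M SX X Y0 Y1 A t)"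
      if "B \<in> sets (SX \<Otimes>\<^sub>M borel \<Otimes>\<^sub>M borel)" for B
      using that sub unfolding sets_pre by (intro sigma_sets.Basic) (auto simp: subalgebra_def)
  qed
qed

lemma distr_covariate_eq:
  assumes [measurable]: "X t \<in> M \<rightarrow>\<^sub>M SX" "Y0 t \<in> borel_measurable M" "Y1 t \<in> borel_measurable M"
      "X s \<in> M \<rightarrow>\<^sub>M SX" "Y0 s \<in> borel_measurable M" "Y1 s \<in> borel_measurable M"
    and "distr M (SX \<Otimes>\<^sub>M borel \<Otimes>\<^sub>M borel) (tuple X Y0 Y1 t) = distr M (SX \<Otimes>\<^sub>M borel \<Otimes>\<^sub>M borel) (tuple X Y0 Y1 s)"
  shows "distr M SX (X t) = distr M SX (X s)"
proof -
  have "distr M SX (X r) = distr (distr M (SX \<Otimes>\<^sub>M borel \<Otimes>\<^sub>M borel) (tuple X Y0 Y1 r)) SX fst"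
    if "r \<in> {s, t}" for r
    using that by (subst distr_distr) (auto intro!: measurable_tuple simp: comp_def tuple_def)
  with assms(7) show ?thesis by simp
qed

lemma
  assumes "prob_space M"
    and X: "\<forall>s. X s \<in> M \<rightarrow>\<^sub>M SX" and A: "\<forall>s. A s \<in> M \<rightarrow>\<^sub>M count_space UNIV"
    and Y0: "\<forall>s. Y0 s \<in> borel_measurable M" and Y1: "\<forall>s. Y1 s \<in> borel_measurable M"
    and propensity: "AE \<omega> in M.
      real_cond_exp M (pre_treatment M SX X Y0 Y1 A t) (\<lambda>\<omega>. if A t \<omega> then 1 else 0) \<omega> = p \<omega>"
    and "0 < d" and p_bounds: "\<And>\<omega>. d \<le> p \<omega> \<and> p \<omega> \<le> 1 - d"
    and obs_L2: "integrable M (\<lambda>\<omega>. (obs_outcome A Y0 Y1 t \<omega>)\<^sup>2)"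
  shows treated_outcome_square_integrable: "integrable M (\<lambda>\<omega>. (Y1 t \<omega>)\<^sup>2)"
    and control_outcome_square_integrable: "integrable M (\<lambda>\<omega>. (Y0 t \<omega>)\<^sup>2)"
proof -
  interpret prob_space M by fact
  let ?F = "pre_treatment M SX X Y0 Y1 A t"
  interpret F: finite_measure_subalgebra M ?F
    by unfold_locales (rule pre_treatment_subalgebra[OF X A Y0 Y1])
  have [measurable]: "A t \<in> M \<rightarrow>\<^sub>M count_space UNIV" "Y0 t \<in> borel_measurable M" "Y1 t \<in> borel_measurable M"
    using A Y0 Y1 by auto
  have "(\<lambda>\<omega>. snd (snd (tuple X Y0 Y1 t \<omega>))) \<in> borel_measurable ?F"
    "(\<lambda>\<omega>. fst (snd (tuple X Y0 Y1 t \<omega>))) \<in> borel_measurable ?F"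
    using measurable_tuple_pre_treatment[OF X A Y0 Y1] by measurable
  then have [measurable]: "Y1 t \<in> borel_measurable ?F" "Y0 t \<in> borel_measurable ?F"
    by (simp_all add: tuple_def)
  let ?treated = "\<lambda>\<omega>. if A t \<omega> then 1 else 0 :: real"
  have treated_cond: "AE \<omega> in M. d \<le> real_cond_exp M ?F ?treated \<omega>"
    using propensity by eventually_elim (use p_bounds in auto)
  have "AE \<omega> in M. real_cond_exp M ?F (\<lambda>\<omega>. 1 - ?treated \<omega>) \<omega>
      = real_cond_exp M ?F (\<lambda>\<omega>. 1) \<omega> - real_cond_exp M ?F ?treated \<omega>"
    by (intro F.real_cond_exp_diff integrable_const_bound[where B=1]) auto
  moreover have "AE \<omega> in M. real_cond_exp M ?F (\<lambda>\<omega>. 1) \<omega> = 1"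
    by (rule F.real_cond_exp_F_meas) auto
  ultimately have control_cond: "AE \<omega> in M. d \<le> real_cond_exp M ?F (\<lambda>\<omega>. 1 - ?treated \<omega>) \<omega>"
    using propensity
  proof eventually_elim
    case (elim \<omega>)
    then show ?case using p_bounds[of \<omega>] by simp
  qed
  show "integrable M (\<lambda>\<omega>. (Y1 t \<omega>)\<^sup>2)"
  proof (rule F.integrable_from_cond_exp_lower_bound[OF _ _ \<open>0 < d\<close> treated_cond])
    show "integrable M (\<lambda>\<omega>. (Y1 t \<omega>)\<^sup>2 * ?treated \<omega>)"
      by (rule Bochner_Integration.integrable_bound[OF obs_L2]) (auto simp: obs_outcome_def)
  qed auto
  show "integrable M (\<lambda>\<omega>. (Y0 t \<omega>)\<^sup>2)"
  proof (rule F.integrable_from_cond_exp_lower_bound[OF _ _ \<open>0 < d\<close> control_cond])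
    show "integrable M (\<lambda>\<omega>. (Y0 t \<omega>)\<^sup>2 * (1 - ?treated \<omega>))"
      by (rule Bochner_Integration.integrable_bound[OF obs_L2]) (auto simp: obs_outcome_def)
  qed auto
qed

lemma regression_function_square_integrable:
  assumes P: "prob_space M"
    and X: "\<forall>s. X s \<in> M \<rightarrow>\<^sub>M SX" and A: "\<forall>s. A s \<in> M \<rightarrow>\<^sub>M count_space UNIV"
    and Y0: "\<forall>s. Y0 s \<in> borel_measurable M" and Y1: "\<forall>s. Y1 s \<in> borel_measurable M"
    and "2 \<le> k" and propensity: "AE \<omega> in M.
      real_cond_exp M (pre_treatment M SX X Y0 Y1 A t) (\<lambda>\<omega>. if A t \<omega> then 1 else 0) \<omega> = trunc k (p \<omega>)"
    and obs_L2: "integrable M (\<lambda>\<omega>. (obs_outcome A Y0 Y1 t \<omega>)\<^sup>2)"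
    and "f \<in> borel_measurable SX"
    and regression: "AE \<omega> in M.
      real_cond_exp M (vimage_algebra (space M) (X t) SX) (if a then Y1 t else Y0 t) \<omega> = f (X t \<omega>)"
  shows "integrable (distr M SX (X t)) (\<lambda>x. (f x)\<^sup>2)"
proof -
  interpret prob_space M by (rule P)
  have "0 < 1 / k" using \<open>2 \<le> k\<close> by simp
  note outcomes_L2 = treated_outcome_square_integrable[OF P X A Y0 Y1 propensity this]
    control_outcome_square_integrable[OF P X A Y0 Y1 propensity this]
  have "integrable M (\<lambda>\<omega>. ((if a then Y1 t else Y0 t) \<omega>)\<^sup>2)"
    using outcomes_L2 trunc_bounds[OF \<open>2 \<le> k\<close>] obs_L2 by auto
  then show ?thesis
    using X Y0 Y1 \<open>f \<in> borel_measurable SX\<close> regression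
    by (intro square_integrable_regression_function) auto
qed

theorem lemma3:
  fixes M :: "'w measure" and SX :: "'x measure"
    and X :: "nat \<Rightarrow> 'w \<Rightarrow> 'x" and Y0 Y1 :: "nat \<Rightarrow> 'w \<Rightarrow> real"
    and A :: "nat \<Rightarrow> 'w \<Rightarrow> bool"
    and pitil :: "nat \<Rightarrow> 'w \<Rightarrow> 'x \<Rightarrow> real" and k :: "nat \<Rightarrow> real"
    and fhat :: "nat \<Rightarrow> 'w \<Rightarrow> bool \<Rightarrow> 'x \<Rightarrow> real"
    and f :: "bool \<Rightarrow> 'x \<Rightarrow> real" and v :: "bool \<Rightarrow> 'x \<Rightarrow> ennreal"
    and pol :: "'x \<Rightarrow> real" and C1 :: real and theta0 :: real
  defines "Y \<equiv> obs_outcome A Y0 Y1"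
    and "Ya \<equiv> (\<lambda>a t. if a then Y1 t else Y0 t)"
    and "pit \<equiv> (\<lambda>t \<omega> x. trunc (k t) (pitil t \<omega> x))"
    and "Om \<equiv> history M SX X A (obs_outcome A Y0 Y1)"
    and "PX \<equiv> distr M SX (X 1)"
  assumes P: "prob_space M"
    and X_meas: "\<forall>t. X t \<in> M \<rightarrow>\<^sub>M SX"
    and Y0_meas: "\<forall>t. Y0 t \<in> borel_measurable M"
    and Y1_meas: "\<forall>t. Y1 t \<in> borel_measurable M"
    and A_meas: "\<forall>t. A t \<in> M \<rightarrow>\<^sub>M count_space UNIV"
    and iid_indep: "prob_space.indep_vars M (\<lambda>_. SX \<Otimes>\<^sub>M borel \<Otimes>\<^sub>M borel) (tuple X Y0 Y1) {1..}"
    and iid_dist: "\<forall>t\<ge>1. distr M (SX \<Otimes>\<^sub>M borel \<Otimes>\<^sub>M borel) (tuple X Y0 Y1 t)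
                        = distr M (SX \<Otimes>\<^sub>M borel \<Otimes>\<^sub>M borel) (tuple X Y0 Y1 1)"
    and fresh: "\<forall>t\<ge>1. prob_space.indep_set M (sets (Om (t - 1)))
                   (sets (vimage_algebra (space M) (tuple X Y0 Y1 t) (SX \<Otimes>\<^sub>M borel \<Otimes>\<^sub>M borel)))"
    and k_ge: "\<forall>t. 2 \<le> k t"
    and pitil_range: "\<forall>t \<omega> x. 0 < pitil t \<omega> x \<and> pitil t \<omega> x < 1"
    and pitil_meas: "\<forall>t\<ge>1. (\<lambda>(\<omega>, x). pitil t \<omega> x) \<in> borel_measurable (Om (t - 1) \<Otimes>\<^sub>M SX)"
    and assignment: "\<forall>t\<ge>1. AE \<omega> in M.
          real_cond_exp M (pre_treatment M SX X Y0 Y1 A t) (\<lambda>\<omega>. if A t \<omega> then 1 else 0) \<omega>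
            = pit t \<omega> (X t \<omega>)"
    and f_meas: "\<forall>a. f a \<in> borel_measurable SX"
    and f_def: "\<forall>t\<ge>1. \<forall>a. AE \<omega> in M.
          real_cond_exp M (vimage_algebra (space M) (X t) SX) (Ya a t) \<omega> = f a (X t \<omega>)"
    and v_meas: "\<forall>a. v a \<in> borel_measurable SX"
    and v_def: "\<forall>t\<ge>1. \<forall>a. AE \<omega> in M.
          nn_cond_exp M (vimage_algebra (space M) (X t) SX)
             (\<lambda>\<omega>. ennreal ((Ya a t \<omega> - f a (X t \<omega>))\<^sup>2)) \<omega> = v a (X t \<omega>)"
    and theta0_def: "theta0 = (\<integral>\<omega>. Y1 1 \<omega> - Y0 1 \<omega> \<partial>M)"
    and fhat_meas: "\<forall>t a. (\<lambda>(\<omega>, x). fhat t \<omega> a x) \<in> borel_measurable (Om t \<Otimes>\<^sub>M SX)"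
    and var_Y: "\<forall>t\<ge>1. integrable M (\<lambda>\<omega>. (Y t \<omega>)\<^sup>2)"
    and v_finite: "\<forall>a x. v a x < \<infinity>"
    and fhat_rate: "\<forall>a. op1 M (\<lambda>t \<omega>. k t * L2dist PX (fhat t \<omega> a) (f a))"
    and pol_meas: "pol \<in> borel_measurable SX"
    and pol_range: "\<forall>x. 0 < pol x \<and> pol x < 1"
    and pi_rate: "op1 M (\<lambda>t \<omega>. k t * L2dist PX (pit t \<omega>) pol)"
    and aipw_bound: "\<forall>a x. 0 < pi_aipw v a x \<and> 1 / pi_aipw v a x < C1"
    and var_fhat: "\<forall>t\<ge>1. \<forall>a. integrable M (\<lambda>\<omega>. (fhat (t - 1) \<omega> a (X t \<omega>))\<^sup>2)"
  shows "op1 M (\<lambda>n \<omega>. real_cond_exp M (Om n)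
           (\<lambda>\<omega>. (fhat n \<omega> True (X (Suc n) \<omega>) - fhat n \<omega> False (X (Suc n) \<omega>) - theta0)\<^sup>2
               - (f True (X (Suc n) \<omega>) - f False (X (Suc n) \<omega>) - theta0)\<^sup>2) \<omega>)"
proof -
  interpret prob_space M by (rule P)
  have Om_sub: "subalgebra M (Om n)" for n
    unfolding Om_def using X_meas A_meas Y0_meas Y1_meas
    by (intro history_subalgebra allI measurable_obs_outcome) auto
  have PX_Suc: "distr M SX (X (Suc n)) = PX" for n
    unfolding PX_def using X_meas Y0_meas Y1_meas iid_dist[rule_format, of "Suc n"]
    by (intro distr_covariate_eq) auto
  have indep: "indep_set (sets (Om n)) (sets (vimage_algebra (space M) (X (Suc n)) SX))" for n
    using indep_set_vimage_algebra_comp[OF fresh[rule_format, of "Suc n"], of fst SX]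
      measurable_space[OF measurable_tuple[of X "Suc n" M SX Y0 Y1]] X_meas Y0_meas Y1_meas
    by (simp add: tuple_def)
  have f_L2: "integrable PX (\<lambda>x. (f a x)\<^sup>2)" for a
    unfolding PX_def
    by (rule regression_function_square_integrable[OF P X_meas A_meas Y0_meas Y1_meas k_ge[rule_format]
          assignment[rule_format, OF order_refl, unfolded pit_def] var_Y[rule_format, OF order_refl, unfolded Y_def]
          f_meas[rule_format] f_def[rule_format, OF order_refl, unfolded Ya_def]])
  define D where "D a n \<omega> = L2dist PX (fhat n \<omega> a) (f a)" for a n \<omega>
  have D_meas: "D a n \<in> borel_measurable M" for a n
    unfolding D_def[abs_def] PX_def using Om_sub fhat_meas f_meas X_meas
    by (intro borel_measurable_L2dist[where S=SX] prob_space_distr) auto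
  have D_le: "\<bar>D a n \<omega>\<bar> \<le> \<bar>k n * D a n \<omega>\<bar>" for a n \<omega>
    using k_ge[rule_format, of n] mult_right_mono[of 1 "k n" "D a n \<omega>"]
    by (simp add: D_def L2dist_def abs_mult)
  have "op1 M (D a)" for a
    by (rule op1_dominated[where c="\<lambda>_. 1" and G=0, OF P _ fhat_rate[rule_format, of a, folded D_def]])
      (use D_meas D_le in auto)
  then have D_op1: "op1 M (\<lambda>n \<omega>. (D True n \<omega>)\<^sup>2 + (D False n \<omega>)\<^sup>2)"
    using D_meas by (intro op1_add op1_power2 P) auto
  have bound: "AE \<omega> in M. \<bar>real_cond_exp M (Om n)
           (\<lambda>\<omega>. (fhat n \<omega> True (X (Suc n) \<omega>) - fhat n \<omega> False (X (Suc n) \<omega>) - theta0)\<^sup>2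
               - (f True (X (Suc n) \<omega>) - f False (X (Suc n) \<omega>) - theta0)\<^sup>2) \<omega>\<bar>
      \<le> 2 * (1 + 1/d) * \<bar>(D True n \<omega>)\<^sup>2 + (D False n \<omega>)\<^sup>2\<bar>
        + d * (\<integral>x. (f True x - f False x - theta0)\<^sup>2 \<partial>PX)" if "0 < d" for d n
    using real_cond_exp_power2_contrast_diff_le[OF Om_sub _ indep fhat_meas[rule_format] fhat_meas[rule_format]
        _ _ var_fhat[rule_format, of "Suc n", simplified] var_fhat[rule_format, of "Suc n", simplified] _ _ that]
      X_meas f_meas f_L2
    unfolding PX_Suc D_def power2_L2dist by auto
  show ?thesis
    by (rule op1_dominated[OF P _ D_op1 bound]) (use D_meas in auto)
qed

end
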